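(* Consider the parametric multistage stochastic optimization problem described in the context, and assume: (A1) the noises $\mathbf{W}_1,\dots,\mathbf{W}_T$ are independent and each has finite support; (A2) (i) the problem is feasible, i.e. $\Phi(p)<+\infty$ for some $p\in\mathcal{P}_{\mathrm{ad}}$; (ii) each dynamics $f_t$ is affine in $(x,u)$; (iii) for all $t\in\{0,\dots,T-1\}$ and all $w\in\mathrm{Supp}(\mathbf{W}_{t+1})$, the function $L_t(\cdot,\cdot,w,\cdot)$ belongs to $\Gamma_{\mathcal{K}}[\mathbb{X}\times\mathbb{U},\mathbb{P}]$; (iv) $K\in\Gamma[\mathbb{X},\mathbb{P}]$. Then the parametric value functions $V_0,\dots,V_T$ are proper and belong to $\Gamma[\mathbb{X},\mathbb{P}]$. Moreover, suppose in addition that, for a given set $\mathcal{P}\subset\mathbb{P}$: (A3) for all $t\in\{0,\dots,T-1\}$ and all $w\in\mathrm{Supp}(\mathbf{W}_{t+1})$, $L_t(\cdot,\cdot,w,\cdot)\in\Theta_{\mathcal{K}}[\mathbb{X}\times\mathbb{U},\mathcal{P}]$, and $K\in\Theta[\mathbb{X},\mathcal{P}]$. Then: (a) the functions $V_0,\dots,V_T$ belong to $\Theta[\mathbb{X},\mathcal{P}]$ and, for all $p\in\mathrm{int}\,\mathcal{P}$, their gradients with respect to $p$ are given by the backward induction $$\nabla_pV_T(x,p)=\nabla_pK(x,p)\quad\forall x\in\mathrm{dom}\,V_T(\cdot,p),$$ and, for every $t\in\{0,\dots,T-1\}$ and all $x\in\mathrm{dom}\,V_t(\cdot,p)$, $$\nabla_pV_t(x,p)=\mathbb{E}\big[\nabla_pL_t(x,u^\star,\mathbf{W}_{t+1},p)+\nabla_pV_{t+1}\big(f_t(x,u^\star,\mathbf{W}_{t+1}),p\big)\big],$$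 where $u^\star$ is any control in the solution set $\mathcal{U}^\star_t(x,p)$; (b) for any closed convex subset $\mathcal{P}_{\mathrm{ad}}\subset\mathcal{P}$, the upstream problem $\min_{p\in\mathcal{P}_{\mathrm{ad}}}\Phi(p)$ is a convex differentiable optimization problem.
   Context: Setting: $T\ge1$ is an integer; $\mathbb{X}=\mathbb{R}^{n_x}$, $\mathbb{U}=\mathbb{R}^{n_u}$, $\mathbb{W}=\mathbb{R}^{n_w}$, $\mathbb{P}=\mathbb{R}^{n_p}$. On a probability space, $\mathbf{W}_1,\dots,\mathbf{W}_T$ are random variables with values in $\mathbb{W}$; $\mathrm{Supp}(\mathbf{W}_t)$ is the set of values taken with positive probability. Given are dynamics $f_t:\mathbb{X}\times\mathbb{U}\times\mathbb{W}\to\mathbb{X}$, stage costs $L_t:\mathbb{X}\times\mathbb{U}\times\mathbb{W}\times\mathbb{P}\to\,]-\infty,+\infty]$ ($t=0,\dots,T-1$), a final cost $K:\mathbb{X}\times\mathbb{P}\to\,]-\infty,+\infty]$, an initial state $x_0\in\mathbb{X}$ and an admissible parameter set $\mathcal{P}_{\mathrm{ad}}\subseteq\mathbb{P}$. For $p\in\mathbb{P}$, $\Phi(p)=\inf\mathbb{E}\big[\sum_{t=0}^{T-1}L_t(\mathbf{X}_t,\mathbf{U}_t,\mathbf{W}_{t+1},p)+K(\mathbf{X}_T,p)\big]$, the infimum being over random controls $\mathbf{U}_t$ measurable with respect to $\sigma(\mathbf{W}_1,\dots,\mathbf{W}_t)$ ($\mathbf{U}_0$ deterministic), with $\mathbf{X}_0=x_0$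 and $\mathbf{X}_{t+1}=f_t(\mathbf{X}_t,\mathbf{U}_t,\mathbf{W}_{t+1})$. The upstream problem is $\min_{p\in\mathcal{P}_{\mathrm{ad}}}\Phi(p)$. The parametric value functions are defined by $V_T(x,p)=K(x,p)$ and $V_t(x,p)=\inf_{u\in\mathbb{U}}Q_t(x,u,p)$, where $Q_t(x,u,p)=\mathbb{E}\big[L_t(x,u,\mathbf{W}_{t+1},p)+V_{t+1}(f_t(x,u,\mathbf{W}_{t+1}),p)\big]$; the solution set is $\mathcal{U}^\star_t(x,p)=\arg\min_{u\in\mathbb{U}}Q_t(x,u,p)$. Under (A1), $\Phi(p)=V_0(x_0,p)$. A function is proper if it never takes the value $-\infty$ and its effective domain $\mathrm{dom}\,g=\{g<+\infty\}$ is nonempty. Function classes: for a Euclidean space $\mathbb{Y}$, $\Gamma[\mathbb{Y},\mathbb{P}]$ is the set of lower semicontinuous convex functions $\mathbb{Y}\times\mathbb{P}\to\,]-\infty,+\infty]$. For $\mathcal{P}\subset\mathbb{P}$, $\Theta[\mathbb{Y},\mathcal{P}]$ is the set of $\theta\in\Gamma[\mathbb{Y},\mathbb{P}]$ with $\mathrm{dom}\,\theta=Y_\theta\times\mathcal{P}$ for some (possibly empty) $Y_\theta\subset\mathbb{Y}$ and such that $\theta(y,\cdot)$ is differentiable on $\mathrm{int}\,\mathcal{P}$ for each $y\in Y_\theta$. $\Gamma_{\mathcal{K}}[\mathbb{X}\times\mathbb{U},\mathbb{P}]$ is the set of $\gamma\in\Gamma[\mathbb{X}\times\mathbb{U},\mathbb{P}]$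 for which some compact $\mathcal{K}_\gamma\subset\mathbb{U}$ satisfies $\mathrm{dom}\,\gamma(x,\cdot,p)\subset\mathcal{K}_\gamma$ for all $(x,p)$; $\Theta_{\mathcal{K}}[\mathbb{X}\times\mathbb{U},\mathcal{P}]=\Theta[\mathbb{X}\times\mathbb{U},\mathcal{P}]\cap\Gamma_{\mathcal{K}}[\mathbb{X}\times\mathbb{U},\mathbb{P}]$. *)

theory Defs
  imports "HOL-Analysis.Analysis" "HOL-Probability.Probability_Mass_Function"
begin

text \<open>Functions Y x P -> ]-inf,+inf] are modelled curried, g :: 'y => 'p => ereal,
  together with the requirement that the value -inf is never taken.\<close>

definition edom :: "('y \<Rightarrow> 'p \<Rightarrow> ereal) \<Rightarrow> ('y \<times> 'p) set" where
  "edom g = {(y, p). g y p < \<infinity>}"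

definition lsc_fun :: "('y::topological_space \<Rightarrow> 'p::topological_space \<Rightarrow> ereal) \<Rightarrow> bool" where
  "lsc_fun g \<longleftrightarrow> (\<forall>c::real. closed {z. case_prod g z \<le> ereal c})"

definition econvex_fun :: "('y::real_vector \<Rightarrow> 'p::real_vector \<Rightarrow> ereal) \<Rightarrow> bool" where
  "econvex_fun g \<longleftrightarrow> (\<forall>z1 z2. \<forall>l::real. 0 < l \<and> l < 1 \<longrightarrow>
      case_prod g (l *\<^sub>R z1 + (1 - l) *\<^sub>R z2)
        \<le> ereal l * case_prod g z1 + ereal (1 - l) * case_prod g z2)"

definition Gamma_cls :: "('y::euclidean_space \<Rightarrow> 'p::euclidean_space \<Rightarrow> ereal) \<Rightarrow> bool" where
  "Gamma_cls g \<longleftrightarrow> (\<forall>y p. g y p \<noteq> -\<infinity>) \<and> lsc_fun g \<and> econvex_fun g"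

definition proper_fun :: "('y \<Rightarrow> 'p \<Rightarrow> ereal) \<Rightarrow> bool" where
  "proper_fun g \<longleftrightarrow> (\<forall>y p. g y p \<noteq> -\<infinity>) \<and> edom g \<noteq> {}"

definition Theta_cls :: "'p set \<Rightarrow> ('y::euclidean_space \<Rightarrow> 'p::euclidean_space \<Rightarrow> ereal) \<Rightarrow> bool" where
  "Theta_cls P g \<longleftrightarrow> Gamma_cls g \<and>
     (\<exists>Y. edom g = Y \<times> P \<and>
        (\<forall>y\<in>Y. \<forall>p\<in>interior P. (\<lambda>q. real_of_ereal (g y q)) differentiable (at p)))"

definition GammaK_cls :: "('x::euclidean_space \<times> 'u::euclidean_space \<Rightarrow> 'p::euclidean_space \<Rightarrow> ereal) \<Rightarrow> bool" where
  "GammaK_cls g \<longleftrightarrow> Gamma_cls g \<and>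
     (\<exists>Kc. compact Kc \<and> (\<forall>x p. {u. g (x, u) p < \<infinity>} \<subseteq> Kc))"

definition ThetaK_cls :: "'p set \<Rightarrow> ('x::euclidean_space \<times> 'u::euclidean_space \<Rightarrow> 'p::euclidean_space \<Rightarrow> ereal) \<Rightarrow> bool" where
  "ThetaK_cls P g \<longleftrightarrow> Theta_cls P g \<and> GammaK_cls g"

text \<open>Gradient with respect to the parameter p of theta(y,.) (meaningful where differentiable).\<close>
definition pgrad :: "('y \<Rightarrow> 'p::euclidean_space \<Rightarrow> ereal) \<Rightarrow> 'y \<Rightarrow> 'p \<Rightarrow> 'p" where
  "pgrad g y p = (SOME d. ((\<lambda>q. real_of_ereal (g y q)) has_derivative (\<lambda>h. d \<bullet> h)) (at p))"

text \<open>Noise W_t (t = 1..T) has law W t (a pmf); Supp(W_t) = set_pmf (W t).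
  Expectation of a function of W_{t+1} (finite support).\<close>
definition Expect :: "'w pmf \<Rightarrow> ('w \<Rightarrow> ereal) \<Rightarrow> ereal" where
  "Expect D g = (\<Sum>w\<in>set_pmf D. ereal (pmf D w) * g w)"

text \<open>Parametric value functions, by backward recursion; Vrec n is V_{T-n}.\<close>
primrec Vrec :: "nat \<Rightarrow> (nat \<Rightarrow> 'x \<Rightarrow> 'u \<Rightarrow> 'w \<Rightarrow> 'x)
    \<Rightarrow> (nat \<Rightarrow> 'x \<Rightarrow> 'u \<Rightarrow> 'w \<Rightarrow> 'p \<Rightarrow> ereal) \<Rightarrow> ('x \<Rightarrow> 'p \<Rightarrow> ereal)
    \<Rightarrow> (nat \<Rightarrow> 'w pmf) \<Rightarrow> nat \<Rightarrow> 'x \<Rightarrow> 'p \<Rightarrow> ereal" where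
  "Vrec T f L K W 0 = K"
| "Vrec T f L K W (Suc n) = (\<lambda>x p. INF u. Expect (W (T - n))
      (\<lambda>w. L (T - Suc n) x u w p + Vrec T f L K W n (f (T - Suc n) x u w) p))"

definition Vfun :: "nat \<Rightarrow> (nat \<Rightarrow> 'x \<Rightarrow> 'u \<Rightarrow> 'w \<Rightarrow> 'x)
    \<Rightarrow> (nat \<Rightarrow> 'x \<Rightarrow> 'u \<Rightarrow> 'w \<Rightarrow> 'p \<Rightarrow> ereal) \<Rightarrow> ('x \<Rightarrow> 'p \<Rightarrow> ereal)
    \<Rightarrow> (nat \<Rightarrow> 'w pmf) \<Rightarrow> nat \<Rightarrow> 'x \<Rightarrow> 'p \<Rightarrow> ereal" where
  "Vfun T f L K W t = Vrec T f L K W (T - t)"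

definition Qfun :: "nat \<Rightarrow> (nat \<Rightarrow> 'x \<Rightarrow> 'u \<Rightarrow> 'w \<Rightarrow> 'x)
    \<Rightarrow> (nat \<Rightarrow> 'x \<Rightarrow> 'u \<Rightarrow> 'w \<Rightarrow> 'p \<Rightarrow> ereal) \<Rightarrow> ('x \<Rightarrow> 'p \<Rightarrow> ereal)
    \<Rightarrow> (nat \<Rightarrow> 'w pmf) \<Rightarrow> nat \<Rightarrow> 'x \<Rightarrow> 'u \<Rightarrow> 'p \<Rightarrow> ereal" where
  "Qfun T f L K W t x u p = Expect (W (Suc t))
      (\<lambda>w. L t x u w p + Vfun T f L K W (Suc t) (f t x u w) p)"

definition Usol :: "nat \<Rightarrow> (nat \<Rightarrow> 'x \<Rightarrow> 'u \<Rightarrow> 'w \<Rightarrow> 'x)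
    \<Rightarrow> (nat \<Rightarrow> 'x \<Rightarrow> 'u \<Rightarrow> 'w \<Rightarrow> 'p \<Rightarrow> ereal) \<Rightarrow> ('x \<Rightarrow> 'p \<Rightarrow> ereal)
    \<Rightarrow> (nat \<Rightarrow> 'w pmf) \<Rightarrow> nat \<Rightarrow> 'x \<Rightarrow> 'p \<Rightarrow> 'u set" where
  "Usol T f L K W t x p = {u. \<forall>v. Qfun T f L K W t x u p \<le> Qfun T f L K W t x v p}"

text \<open>The original problem Phi(p), on the canonical probability space of noise paths
  omega = (omega 1, ..., omega T) with independent coordinates of laws W 1, ..., W T.
  A control policy pi gives U_t = pi t omega; it must be sigma(W_1..W_t)-measurable,
  i.e. depend only on omega 1, ..., omega t (U_0 is deterministic).\<close>
definition nonanticipative :: "nat \<Rightarrow> (nat \<Rightarrow> (nat \<Rightarrow> 'w) \<Rightarrow> 'u) \<Rightarrow> bool" where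
  "nonanticipative T pol \<longleftrightarrow> (\<forall>t<T. \<forall>\<omega> \<omega>'. (\<forall>s\<in>{1..t}. \<omega> s = \<omega>' s) \<longrightarrow> pol t \<omega> = pol t \<omega>')"

primrec state :: "(nat \<Rightarrow> 'x \<Rightarrow> 'u \<Rightarrow> 'w \<Rightarrow> 'x) \<Rightarrow> 'x \<Rightarrow> (nat \<Rightarrow> (nat \<Rightarrow> 'w) \<Rightarrow> 'u)
    \<Rightarrow> (nat \<Rightarrow> 'w) \<Rightarrow> nat \<Rightarrow> 'x" where
  "state f x0 pol \<omega> 0 = x0"
| "state f x0 pol \<omega> (Suc t) = f t (state f x0 pol \<omega> t) (pol t \<omega>) (\<omega> (Suc t))"

definition Phi :: "nat \<Rightarrow> (nat \<Rightarrow> 'x \<Rightarrow> 'u \<Rightarrow> 'w \<Rightarrow> 'x)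
    \<Rightarrow> (nat \<Rightarrow> 'x \<Rightarrow> 'u \<Rightarrow> 'w \<Rightarrow> 'p \<Rightarrow> ereal) \<Rightarrow> ('x \<Rightarrow> 'p \<Rightarrow> ereal)
    \<Rightarrow> (nat \<Rightarrow> 'w pmf) \<Rightarrow> 'x \<Rightarrow> 'p \<Rightarrow> ereal" where
  "Phi T f L K W x0 p = (INF pol \<in> {pol. nonanticipative T pol}.
     \<Sum>\<omega>\<in>PiE {1..T} (\<lambda>t. set_pmf (W t)).
       ereal (\<Prod>t\<in>{1..T}. pmf (W t) (\<omega> t)) *
       ((\<Sum>t<T. L t (state f x0 pol \<omega> t) (pol t \<omega>) (\<omega> (Suc t)) p)
         + K (state f x0 pol \<omega> T) p))"

definition affine_xu :: "('x::real_vector \<Rightarrow> 'u::real_vector \<Rightarrow> 'w \<Rightarrow> 'x) \<Rightarrow> bool" where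
  "affine_xu g \<longleftrightarrow> (\<forall>w. linear (\<lambda>(x, u). g x u w - g 0 0 w))"

end

theory Submission
  imports Defs
begin

text \<open>
  Because the noises have finite support, every expectation is a finite sum with positive weights
  and the Bellman recursion \<open>V\<^sub>t(x,p) = inf\<^sub>u Q\<^sub>t(x,u,p)\<close> can be analysed stage by stage.
  Going backwards, \<open>Q\<^sub>t\<close> is jointly convex and lower semicontinuous in \<open>(u,x,p)\<close> because
  \<open>f\<^sub>t\<close> is affine, and its effective domain in \<open>u\<close> lies in a fixed compact set; hence the
  infimum over \<open>u\<close> is attained and the marginal \<open>V\<^sub>t\<close> is again convex and lower
  semicontinuous. Selecting a minimiser at every state gives a feedback policy whose cost is
  \<open>V\<^sub>0\<close>, so \<open>\<Phi> = V\<^sub>0\<close>.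
  Under (A3) the domain of \<open>V\<^sub>t\<close> is \<open>Y\<^sub>t \<times> \<P>\<close>. For \<open>p \<in> int \<P>\<close> and a minimiser
  \<open>u\<^sup>*\<close>, the convex function \<open>V\<^sub>t(x,\<cdot>)\<close> lies below the differentiable function
  \<open>Q\<^sub>t(x,u\<^sup>*,\<cdot>)\<close> and touches it at \<open>p\<close>; a convex function squeezed in this way is
  differentiable at the contact point with the same gradient, which yields the gradient
  recursion and, at \<open>t = 0\<close>, the differentiability of \<open>\<Phi>\<close>.
\<close>

section \<open>Convex and lower semicontinuous extended-real functions\<close>

definition convex_ereal :: "('a::real_vector \<Rightarrow> ereal) \<Rightarrow> bool" where
  "convex_ereal F \<longleftrightarrow> (\<forall>z1 z2. \<forall>l::real. 0 < l \<and> l < 1 \<longrightarrow>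
      F (l *\<^sub>R z1 + (1 - l) *\<^sub>R z2) \<le> ereal l * F z1 + ereal (1 - l) * F z2)"

definition lsc_ereal :: "('a::topological_space \<Rightarrow> ereal) \<Rightarrow> bool" where
  "lsc_ereal F \<longleftrightarrow> (\<forall>c::real. closed {z. F z \<le> ereal c})"

definition lsc_ereal_at :: "('a::topological_space \<Rightarrow> ereal) \<Rightarrow> 'a \<Rightarrow> bool" where
  "lsc_ereal_at F z \<longleftrightarrow> (\<forall>y::real. ereal y < F z \<longrightarrow> eventually (\<lambda>x. ereal y < F x) (nhds z))"

lemma econvex_fun_iff: "econvex_fun g \<longleftrightarrow> convex_ereal (case_prod g)"
  unfolding econvex_fun_def convex_ereal_def by simp

lemma lsc_fun_iff: "lsc_fun g \<longleftrightarrow> lsc_ereal (case_prod g)"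
  unfolding lsc_fun_def lsc_ereal_def by simp

lemma lsc_ereal_iff_at: "lsc_ereal F \<longleftrightarrow> (\<forall>z. lsc_ereal_at F z)"
proof -
  have "closed {z. F z \<le> ereal c} \<longleftrightarrow> open {z. ereal c < F z}" for c
    by (simp add: closed_def Collect_neg_eq[symmetric] not_le)
  also have "\<dots> c \<longleftrightarrow> (\<forall>z. ereal c < F z \<longrightarrow> eventually (\<lambda>x. ereal c < F x) (nhds z))" for c
    by (simp add: open_subopen[of "{z. ereal c < F z}"] eventually_nhds subset_eq)
  finally show ?thesis unfolding lsc_ereal_def lsc_ereal_at_def by blast
qed

lemma sum_ereal_neq_MInfty: "(\<And>w. w \<in> A \<Longrightarrow> F w \<noteq> (-\<infinity>::ereal)) \<Longrightarrow> (\<Sum>w\<in>A. F w) \<noteq> -\<infinity>"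
  by (induct A rule: infinite_finite_induct) auto

lemma ereal_mult_neq_MInfty: "c \<ge> 0 \<Longrightarrow> x \<noteq> -\<infinity> \<Longrightarrow> ereal c * x \<noteq> -\<infinity>"
  by (cases x) auto

lemma ereal_add_less_PInfty_iff: "(a::ereal) + b < \<infinity> \<longleftrightarrow> a < \<infinity> \<and> b < \<infinity>"
  by (cases a; cases b) auto

lemma sum_ereal_weighted_less_PInfty_iff:
  assumes "finite A" "\<And>w. w \<in> A \<Longrightarrow> c w > 0"
  shows "(\<Sum>w\<in>A. ereal (c w) * g w) < \<infinity> \<longleftrightarrow> (\<forall>w\<in>A. g w < \<infinity>)"
proof -
  have "ereal (c w) * g w = \<infinity> \<longleftrightarrow> g w = \<infinity>" if "w \<in> A" for w
    using assms(2)[OF that] by (cases "g w") auto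
  then show ?thesis
    using assms(1) by (simp add: less_top[symmetric] sum_Pinfty)
qed

lemma ereal_nonneg_distrib: "0 \<le> c \<Longrightarrow> ereal c * (a + b) = ereal c * a + ereal c * b"
  using distrib_left_ereal_nn[of c a b] by (simp add: mult.commute)

lemma ereal_nonneg_mult_sum: "0 \<le> c \<Longrightarrow> ereal c * (\<Sum>x\<in>A. g x) = (\<Sum>x\<in>A. ereal c * g x)"
  using sum_distrib_right_ereal[of c g A] by (simp add: mult.commute)

lemma lsc_ereal_at_add:
  assumes "lsc_ereal_at F z" "lsc_ereal_at G z" "F z \<noteq> -\<infinity>" "G z \<noteq> -\<infinity>"
  shows "lsc_ereal_at (\<lambda>x. F x + G x) z"
  unfolding lsc_ereal_at_def
proof (intro allI impI)
  fix y :: real assume y: "ereal y < F z + G z"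
  have "\<exists>a b::real. ereal a < F z \<and> ereal b < G z \<and> y \<le> a + b"
  proof (cases "F z"; cases "G z")
    fix r s assume "F z = ereal r" "G z = ereal s"
    then show ?thesis using y
      by (intro exI[of _ "r - (r + s - y)/2"] exI[of _ "s - (r + s - y)/2"]) auto
  next
    fix r assume "F z = ereal r" "G z = \<infinity>"
    then show ?thesis by (intro exI[of _ "r - 1"] exI[of _ "y - r + 1"]) auto
  next
    fix s assume "F z = \<infinity>" "G z = ereal s"
    then show ?thesis by (intro exI[of _ "y - s + 1"] exI[of _ "s - 1"]) auto
  next
    assume "F z = \<infinity>" "G z = \<infinity>"
    then show ?thesis by (intro exI[of _ y] exI[of _ 0]) auto
  qed (use assms in auto)
  then obtain a b :: real where ab: "ereal a < F z" "ereal b < G z" "y \<le> a + b" by blast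
  have "eventually (\<lambda>x. ereal a < F x) (nhds z)" "eventually (\<lambda>x. ereal b < G x) (nhds z)"
    using assms(1,2) ab unfolding lsc_ereal_at_def by auto
  then show "eventually (\<lambda>x. ereal y < F x + G x) (nhds z)"
  proof eventually_elim
    case (elim x)
    have "ereal a + ereal b < F x + G x" using elim by (rule ereal_add_strict_mono2)
    moreover have "ereal y \<le> ereal a + ereal b" using ab by simp
    ultimately show ?case by (meson order.strict_trans1)
  qed
qed

lemma lsc_ereal_at_cmult:
  assumes "c \<ge> 0" "lsc_ereal_at F z"
  shows "lsc_ereal_at (\<lambda>x. ereal c * F x) z"
proof (cases "c = 0")
  case True
  then show ?thesis by (simp add: lsc_ereal_at_def zero_ereal_def[symmetric])
next
  case False
  with assms have c: "c > 0" by simp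
  show ?thesis unfolding lsc_ereal_at_def
  proof (intro allI impI)
    fix y assume "ereal y < ereal c * F z"
    then have "ereal (y / c) < F z" using c by (cases "F z") (auto simp: field_simps)
    then have "eventually (\<lambda>x. ereal (y / c) < F x) (nhds z)"
      using assms(2) unfolding lsc_ereal_at_def by auto
    then show "eventually (\<lambda>x. ereal y < ereal c * F x) (nhds z)"
    proof eventually_elim
      case (elim x)
      then show ?case using c by (cases "F x") (auto simp: field_simps)
    qed
  qed
qed

lemma lsc_ereal_add:
  assumes "lsc_ereal F" "lsc_ereal G" "\<And>x. F x \<noteq> -\<infinity>" "\<And>x. G x \<noteq> -\<infinity>"
  shows "lsc_ereal (\<lambda>x. F x + G x)"
  using assms by (simp add: lsc_ereal_iff_at lsc_ereal_at_add)

lemma lsc_ereal_cmult: "c \<ge> 0 \<Longrightarrow> lsc_ereal F \<Longrightarrow> lsc_ereal (\<lambda>x. ereal c * F x)"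
  by (simp add: lsc_ereal_iff_at lsc_ereal_at_cmult)

lemma lsc_ereal_sum:
  assumes "finite A" "\<And>w. w \<in> A \<Longrightarrow> lsc_ereal (F w)" "\<And>w x. w \<in> A \<Longrightarrow> F w x \<noteq> -\<infinity>"
  shows "lsc_ereal (\<lambda>x. \<Sum>w\<in>A. F w x)"
  using assms
proof (induct A rule: finite_induct)
  case empty
  then show ?case by (simp add: lsc_ereal_def)
next
  case (insert a A)
  then have "lsc_ereal (\<lambda>x. F a x + (\<Sum>w\<in>A. F w x))"
    by (intro lsc_ereal_add sum_ereal_neq_MInfty) auto
  with insert show ?case by simp
qed

lemma lsc_ereal_compose_continuous:
  assumes "lsc_ereal F" "continuous_on UNIV g"
  shows "lsc_ereal (\<lambda>x. F (g x))"
  unfolding lsc_ereal_def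
proof
  fix c
  have "closed (g -` {z. F z \<le> ereal c})"
    using assms unfolding lsc_ereal_def by (intro closed_vimage) (auto simp: continuous_on_eq_continuous_at)
  then show "closed {z. F (g z) \<le> ereal c}" by (simp add: vimage_def)
qed

lemma convex_ereal_add:
  assumes "convex_ereal F" "convex_ereal G" "\<And>x. F x \<noteq> -\<infinity>" "\<And>x. G x \<noteq> -\<infinity>"
  shows "convex_ereal (\<lambda>x. F x + G x)"
  unfolding convex_ereal_def
proof (intro allI impI)
  fix z1 z2 :: 'a and l :: real assume l: "0 < l \<and> l < 1"
  let ?m = "l *\<^sub>R z1 + (1 - l) *\<^sub>R z2"
  have "F ?m + G ?m \<le> (ereal l * F z1 + ereal (1 - l) * F z2) + (ereal l * G z1 + ereal (1 - l) * G z2)"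
    using assms(1,2) l unfolding convex_ereal_def by (intro add_mono) auto
  also have "\<dots> = ereal l * (F z1 + G z1) + ereal (1 - l) * (F z2 + G z2)"
    using l by (simp add: ereal_nonneg_distrib add_ac)
  finally show "F ?m + G ?m \<le> ereal l * (F z1 + G z1) + ereal (1 - l) * (F z2 + G z2)" .
qed

lemma convex_ereal_cmult:
  assumes "c \<ge> 0" "convex_ereal F"
  shows "convex_ereal (\<lambda>x. ereal c * F x)"
  unfolding convex_ereal_def
proof (intro allI impI)
  fix z1 z2 :: 'a and l :: real assume l: "0 < l \<and> l < 1"
  have "ereal c * F (l *\<^sub>R z1 + (1 - l) *\<^sub>R z2) \<le> ereal c * (ereal l * F z1 + ereal (1 - l) * F z2)"
    using assms l unfolding convex_ereal_def by (intro ereal_mult_left_mono) auto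
  also have "\<dots> = ereal l * (ereal c * F z1) + ereal (1 - l) * (ereal c * F z2)"
    using assms(1) l by (simp add: ereal_nonneg_distrib mult.left_commute)
  finally show "ereal c * F (l *\<^sub>R z1 + (1 - l) *\<^sub>R z2)
      \<le> ereal l * (ereal c * F z1) + ereal (1 - l) * (ereal c * F z2)" .
qed

lemma convex_ereal_sum:
  assumes "finite A" "\<And>w. w \<in> A \<Longrightarrow> convex_ereal (F w)" "\<And>w x. w \<in> A \<Longrightarrow> F w x \<noteq> -\<infinity>"
  shows "convex_ereal (\<lambda>x. \<Sum>w\<in>A. F w x)"
  using assms
proof (induct A rule: finite_induct)
  case empty
  then show ?case by (simp add: convex_ereal_def)
next
  case (insert a A)
  then have "convex_ereal (\<lambda>x. F a x + (\<Sum>w\<in>A. F w x))"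
    by (intro convex_ereal_add sum_ereal_neq_MInfty) auto
  with insert show ?case by simp
qed

lemma convex_ereal_compose_affine:
  assumes "convex_ereal F" "\<And>z1 z2 l. g (l *\<^sub>R z1 + (1 - l) *\<^sub>R z2) = l *\<^sub>R g z1 + (1 - l) *\<^sub>R g z2"
  shows "convex_ereal (\<lambda>x. F (g x))"
  using assms unfolding convex_ereal_def by simp

lemma lsc_ereal_attains_INF:
  fixes F :: "'a::euclidean_space \<Rightarrow> ereal"
  assumes "lsc_ereal F" "compact C" and dom: "\<And>u. F u < \<infinity> \<Longrightarrow> u \<in> C"
  shows "\<exists>u. F u = (INF v. F v)"
proof (cases "(INF v. F v) = \<infinity>")
  case True
  then show ?thesis by (metis INF_lower UNIV_I top.extremum_uniqueI top_ereal_def)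
next
  case False
  let ?m = "INF v. F v"
  let ?lev = "\<lambda>c. {u. F u \<le> ereal c}"
  let ?A = "{c. ?m < ereal c}"
  obtain c1 where c1: "?m < ereal c1" using False by (metis less_PInf_Ex_of_nat less_top top_ereal_def)
  have "C \<inter> \<Inter>(?lev ` ?A) \<noteq> {}"
  proof (rule compact_imp_fip[OF \<open>compact C\<close>])
    show "\<And>S. S \<in> ?lev ` ?A \<Longrightarrow> closed S" using assms(1) unfolding lsc_ereal_def by auto
  next
    fix F' assume "finite F'" "F' \<subseteq> ?lev ` ?A"
    then obtain B where B: "B \<subseteq> ?A" "finite B" "F' = ?lev ` B" by (meson finite_subset_image)
    let ?c0 = "Min (insert c1 B)"
    have "?c0 \<in> insert c1 B" using B(2) by (intro Min_in) auto
    then have "?m < ereal ?c0" using B(1) c1 by auto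
    then obtain u where u: "F u < ereal ?c0" by (meson INF_less_iff)
    then have "u \<in> C" using dom by (metis ereal_infty_less(1) less_ereal.simps(4) order.strict_trans)
    moreover have "F u \<le> ereal c" if "c \<in> B" for c
      using u that B(2) by (meson Min_le finite.insertI insertCI ereal_less_eq(3) less_imp_le order_less_le_trans)
    ultimately show "C \<inter> \<Inter>F' \<noteq> {}" using B by auto
  qed
  then obtain u where u: "\<And>c. ?m < ereal c \<Longrightarrow> F u \<le> ereal c" by auto
  have "F u \<le> ?m"
  proof (rule ccontr)
    assume "\<not> F u \<le> ?m"
    then have "?m < F u" by simp
    then obtain z where "?m < ereal z" "ereal z < F u" using ereal_dense2 by blast
    then show False using u by fastforce
  qed
  moreover have "?m \<le> F u" by (rule INF_lower) simp
  ultimately show ?thesis by (intro exI[of _ u]) simp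
qed

lemma lsc_ereal_INF_compact:
  fixes F :: "'u::euclidean_space \<times> 'y::euclidean_space \<Rightarrow> ereal"
  assumes lsc: "lsc_ereal F" and "compact C" and dom: "\<And>u y. F (u, y) < \<infinity> \<Longrightarrow> u \<in> C"
  shows "lsc_ereal (\<lambda>y. INF u. F (u, y))"
  unfolding lsc_ereal_def
proof
  fix c :: real
  have attain: "\<exists>u. F (u, y) = (INF v. F (v, y))" for y
  proof (rule lsc_ereal_attains_INF[of "\<lambda>u. F (u, y)", OF _ \<open>compact C\<close> dom])
    show "lsc_ereal (\<lambda>u. F (u, y))"
      by (rule lsc_ereal_compose_continuous[OF lsc]) (intro continuous_intros)
  qed
  have "(INF u. F (u, y)) \<le> ereal c \<longleftrightarrow> (\<exists>u. u \<in> C \<and> F (u, y) \<le> ereal c)" for y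
  proof
    assume le: "(INF u. F (u, y)) \<le> ereal c"
    obtain u where u: "F (u, y) = (INF v. F (v, y))" using attain by blast
    have "F (u, y) \<le> ereal c" using le unfolding u .
    moreover from this have "F (u, y) < \<infinity>" by (rule le_less_trans) simp
    ultimately show "\<exists>u. u \<in> C \<and> F (u, y) \<le> ereal c" using dom by blast
  next
    assume "\<exists>u. u \<in> C \<and> F (u, y) \<le> ereal c"
    then show "(INF u. F (u, y)) \<le> ereal c" by (auto intro: INF_lower2)
  qed
  then have "{y. (INF u. F (u, y)) \<le> ereal c} = {y. \<exists>u. u \<in> C \<and> (u, y) \<in> {z. F z \<le> ereal c}}"
    by simp
  also have "closed \<dots>"
    using lsc unfolding lsc_ereal_def by (intro closed_compact_projection[OF \<open>compact C\<close>]) simp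
  finally show "closed {y. (INF u. F (u, y)) \<le> ereal c}" .
qed

lemma convex_ereal_INF:
  fixes F :: "'u::real_vector \<times> 'y::real_vector \<Rightarrow> ereal"
  assumes cvx: "convex_ereal F" and attain: "\<And>y. \<exists>u. F (u, y) = (INF v. F (v, y))"
  shows "convex_ereal (\<lambda>y. INF u. F (u, y))"
  unfolding convex_ereal_def
proof (intro allI impI)
  fix y1 y2 :: 'y and l :: real assume l: "0 < l \<and> l < 1"
  obtain u1 u2 where u1: "F (u1, y1) = (INF v. F (v, y1))" and u2: "F (u2, y2) = (INF v. F (v, y2))"
    using attain by meson
  have "(INF u. F (u, l *\<^sub>R y1 + (1 - l) *\<^sub>R y2)) \<le> F (l *\<^sub>R (u1, y1) + (1 - l) *\<^sub>R (u2, y2))"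
    by (auto intro: INF_lower)
  also have "\<dots> \<le> ereal l * F (u1, y1) + ereal (1 - l) * F (u2, y2)"
    using cvx l unfolding convex_ereal_def by blast
  finally show "(INF u. F (u, l *\<^sub>R y1 + (1 - l) *\<^sub>R y2))
      \<le> ereal l * (INF u. F (u, y1)) + ereal (1 - l) * (INF u. F (u, y2))"
    unfolding u1 u2 .
qed

lemma convex_on_real_of_ereal:
  assumes "convex_ereal F" "convex C" and fin: "\<And>x. x \<in> C \<Longrightarrow> \<bar>F x\<bar> \<noteq> \<infinity>"
  shows "convex_on C (\<lambda>x. real_of_ereal (F x))"
proof (rule convex_onI[OF _ \<open>convex C\<close>])
  fix t :: real and x y assume t: "0 < t" "t < 1" and xy: "x \<in> C" "y \<in> C"
  have "F ((1 - t) *\<^sub>R x + t *\<^sub>R y) \<le> ereal (1 - t) * F x + ereal t * F y"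
    using assms(1)[unfolded convex_ereal_def, rule_format, of "1 - t" x y] t by simp
  moreover have "\<bar>F ((1 - t) *\<^sub>R x + t *\<^sub>R y)\<bar> \<noteq> \<infinity>"
    using \<open>convex C\<close> xy t by (intro fin) (simp add: convexD)
  ultimately show "real_of_ereal (F ((1 - t) *\<^sub>R x + t *\<^sub>R y))
      \<le> (1 - t) * real_of_ereal (F x) + t * real_of_ereal (F y)"
    using fin[OF xy(1)] fin[OF xy(2)] by (cases "F x"; cases "F y"; cases "F ((1 - t) *\<^sub>R x + t *\<^sub>R y)") auto
qed

section \<open>Differentiability\<close>

lemma convex_on_midpoint:
  fixes v :: "'a::real_vector \<Rightarrow> real"
  assumes "convex_on S v" "p + h \<in> S" "p - h \<in> S"
  shows "2 * v p \<le> v (p + h) + v (p - h)"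
proof -
  have "v ((1 - 1/2) *\<^sub>R (p + h) + (1/2) *\<^sub>R (p - h)) \<le> (1 - 1/2) * v (p + h) + (1/2) * v (p - h)"
    using convex_onD[OF assms(1), of "1/2"] assms(2,3) by simp
  moreover have "(1 - 1/2) *\<^sub>R (p + h) + (1/2::real) *\<^sub>R (p - h) = p"
    by (simp add: algebra_simps flip: scaleR_add_left)
  ultimately show ?thesis by simp
qed

text \<open>The remainder of \<open>v\<close> at \<open>h\<close> is bounded above by that of \<open>\<phi>\<close> at \<open>h\<close> and, by midpoint
  convexity, below by minus that of \<open>\<phi>\<close> at \<open>-h\<close>.\<close>

lemma has_derivative_convex_below:
  fixes v \<phi> :: "'a::real_normed_vector \<Rightarrow> real"
  assumes S: "open S" "p \<in> S" and cvx: "convex_on S v"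
    and below: "\<And>q. q \<in> S \<Longrightarrow> v q \<le> \<phi> q" and touch: "v p = \<phi> p"
    and d: "(\<phi> has_derivative D) (at p)"
  shows "(v has_derivative D) (at p)"
proof -
  interpret D: bounded_linear D using d by (rule has_derivative_bounded_linear)
  define r where "r h = \<phi> (p + h) - \<phi> p - D h" for h
  have r: "((\<lambda>h. norm (r h) / norm h) \<longlongrightarrow> 0) (at 0)"
    using d unfolding has_derivative_at r_def by simp
  moreover have "filtermap uminus (at (0::'a)) = at 0"
    using filtermap_at_minus[of "0::'a"] by simp
  ultimately have "((\<lambda>h. norm (r h) / norm h) \<longlongrightarrow> 0) (filtermap uminus (at 0))"
    by (simp only:)
  then have r_minus: "((\<lambda>h. norm (r (- h)) / norm h) \<longlongrightarrow> 0) (at 0)"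
    by (simp add: tendsto_compose_filtermap[symmetric] o_def)
  obtain e where e: "e > 0" "ball p e \<subseteq> S" using S open_contains_ball by blast
  have small: "eventually (\<lambda>h. norm h < e) (at (0::'a))"
    using e(1) by (auto simp: eventually_at dist_norm intro!: exI[of _ e])
  have "((\<lambda>h. norm (v (p + h) - v p - D h) / norm h) \<longlongrightarrow> 0) (at 0)"
  proof (rule Lim_null_comparison)
    show "((\<lambda>h. norm (r h) / norm h + norm (r (- h)) / norm h) \<longlongrightarrow> 0) (at 0)"
      using tendsto_add_zero[OF r r_minus] .
    show "eventually (\<lambda>h. norm (norm (v (p + h) - v p - D h) / norm h)
              \<le> norm (r h) / norm h + norm (r (- h)) / norm h) (at 0)"
      using small
    proof eventually_elim
      case (elim h)
      then have in_S: "p + h \<in> S" "p - h \<in> S" using e by (auto simp: dist_norm)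
      have mid: "2 * v p \<le> v (p + h) + v (p - h)" using convex_on_midpoint[OF cvx in_S] .
      have "v (p + h) - v p - D h \<le> r h" "v (p - h) - v p - D (- h) \<le> r (- h)"
        using below[OF in_S(1)] below[OF in_S(2)] touch by (simp_all add: r_def)
      with mid have "\<bar>v (p + h) - v p - D h\<bar> \<le> \<bar>r h\<bar> + \<bar>r (- h)\<bar>" using D.neg[of h] by linarith
      then show ?case by (simp add: add_divide_distrib[symmetric] divide_right_mono)
    qed
  qed
  then show ?thesis using D.bounded_linear_axioms unfolding has_derivative_at by simp
qed

lemma has_derivative_inner_gradient:
  fixes g :: "'a::euclidean_space \<Rightarrow> real"
  assumes "(g has_derivative D) F"
  shows "(g has_derivative (\<lambda>h. (\<Sum>i\<in>Basis. D i *\<^sub>R i) \<bullet> h)) F"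
proof -
  interpret D: linear D using assms by (rule has_derivative_linear)
  have "D h = (\<Sum>i\<in>Basis. D i *\<^sub>R i) \<bullet> h" for h
  proof -
    have "D h = D (\<Sum>i\<in>Basis. (h \<bullet> i) *\<^sub>R i)" by (simp add: euclidean_representation)
    also have "\<dots> = (\<Sum>i\<in>Basis. (h \<bullet> i) * D i)" by (simp add: D.sum D.scale)
    also have "\<dots> = h \<bullet> (\<Sum>i\<in>Basis. D i *\<^sub>R i)" by (auto simp: inner_sum_right intro!: sum.cong)
    also have "\<dots> = (\<Sum>i\<in>Basis. D i *\<^sub>R i) \<bullet> h" by (rule inner_commute)
    finally show ?thesis .
  qed
  then have "D = (\<lambda>h. (\<Sum>i\<in>Basis. D i *\<^sub>R i) \<bullet> h)" by (rule ext)
  then show ?thesis by (rule has_derivative_eq_rhs[OF assms])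
qed

lemma pgrad_eqI:
  assumes "((\<lambda>q. real_of_ereal (g y q)) has_derivative (\<lambda>h. d \<bullet> h)) (at p)"
  shows "pgrad g y p = d"
proof -
  let ?P = "\<lambda>d. ((\<lambda>q. real_of_ereal (g y q)) has_derivative (\<lambda>h. d \<bullet> h)) (at p)"
  have "?P (SOME d. ?P d)" using assms by (rule someI)
  then have "(\<lambda>h. (SOME d. ?P d) \<bullet> h) = (\<lambda>h. d \<bullet> h)" using assms by (rule has_derivative_unique)
  then have "(SOME d. ?P d) \<bullet> ((SOME d. ?P d) - d) = d \<bullet> ((SOME d. ?P d) - d)" by metis
  then have "((SOME d. ?P d) - d) \<bullet> ((SOME d. ?P d) - d) = 0" by (simp add: inner_diff_left)
  then show ?thesis unfolding pgrad_def by simp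
qed

lemma has_derivative_pgrad:
  assumes "(\<lambda>q. real_of_ereal (g y q)) differentiable (at p)"
  shows "((\<lambda>q. real_of_ereal (g y q)) has_derivative (\<lambda>h. pgrad g y p \<bullet> h)) (at p)"
proof -
  obtain D where "((\<lambda>q. real_of_ereal (g y q)) has_derivative D) (at p)"
    using assms unfolding differentiable_def by blast
  then have "((\<lambda>q. real_of_ereal (g y q)) has_derivative (\<lambda>h. (\<Sum>i\<in>Basis. D i *\<^sub>R i) \<bullet> h)) (at p)"
    by (rule has_derivative_inner_gradient)
  moreover from this have "pgrad g y p = (\<Sum>i\<in>Basis. D i *\<^sub>R i)" by (rule pgrad_eqI)
  ultimately show ?thesis by simp
qed

lemma Theta_cls_less_PInfty_iff:
  assumes "Theta_cls P g"
  shows "g y p < \<infinity> \<longleftrightarrow> (\<exists>q\<in>P. g y q < \<infinity>) \<and> p \<in> P"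
proof -
  obtain Y where "edom g = Y \<times> P" using assms unfolding Theta_cls_def by blast
  then have "g y p < \<infinity> \<longleftrightarrow> y \<in> Y \<and> p \<in> P" for y p by (auto simp: edom_def set_eq_iff)
  then show ?thesis by auto
qed

lemma Theta_cls_differentiable:
  assumes "Theta_cls P g" "g y q < \<infinity>" "p \<in> interior P"
  shows "(\<lambda>q. real_of_ereal (g y q)) differentiable (at p)"
proof -
  obtain Y where Y: "edom g = Y \<times> P"
    and d: "\<forall>y\<in>Y. \<forall>p\<in>interior P. (\<lambda>q. real_of_ereal (g y q)) differentiable (at p)"
    using assms(1) unfolding Theta_cls_def by blast
  have "(y, q) \<in> edom g" using assms(2) by (simp add: edom_def)
  with Y d assms(3) show ?thesis by blast
qed

lemma Theta_clsI:
  assumes "Gamma_cls g"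
    and dom: "\<And>y p. g y p < \<infinity> \<longleftrightarrow> (\<exists>q\<in>P. g y q < \<infinity>) \<and> p \<in> P"
    and diff: "\<And>y p. p \<in> interior P \<Longrightarrow> g y p < \<infinity> \<Longrightarrow> (\<lambda>q. real_of_ereal (g y q)) differentiable (at p)"
  shows "Theta_cls P g"
proof -
  let ?Y = "{y. \<exists>q\<in>P. g y q < \<infinity>}"
  have "(y, p) \<in> edom g \<longleftrightarrow> (y, p) \<in> ?Y \<times> P" for y p
    using dom[of y p] by (simp add: edom_def)
  then have "edom g = ?Y \<times> P" by auto
  moreover have "(\<lambda>q. real_of_ereal (g y q)) differentiable (at p)" if "y \<in> ?Y" "p \<in> interior P" for y p
    using that dom[of y p] diff interior_subset by blast
  ultimately show ?thesis unfolding Theta_cls_def using assms(1) by blast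
qed

section \<open>Dynamic programming\<close>

locale multistage =
  fixes T :: nat
    and f :: "nat \<Rightarrow> 'x::euclidean_space \<Rightarrow> 'u::euclidean_space \<Rightarrow> 'w::euclidean_space \<Rightarrow> 'x"
    and L :: "nat \<Rightarrow> 'x \<Rightarrow> 'u \<Rightarrow> 'w \<Rightarrow> 'p::euclidean_space \<Rightarrow> ereal"
    and K :: "'x \<Rightarrow> 'p \<Rightarrow> ereal"
    and W :: "nat \<Rightarrow> 'w pmf"
  assumes L_neq_MInfty: "\<And>t x u w p. L t x u w p \<noteq> -\<infinity>"
    and finite_support: "\<And>t. t \<in> {1..T} \<Longrightarrow> finite (set_pmf (W t))"
begin

abbreviation "V \<equiv> Vfun T f L K W"
abbreviation "Q \<equiv> Qfun T f L K W"
abbreviation "Uopt \<equiv> Usol T f L K W"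
abbreviation "S t \<equiv> set_pmf (W (Suc t))"
abbreviation "pw t w \<equiv> pmf (W (Suc t)) w"

lemma V_T: "V T = K"
  by (simp add: Vfun_def)

lemma V_eq_INF_Q: "t < T \<Longrightarrow> V t x p = (INF u. Q t x u p)"
proof -
  assume "t < T"
  then have "T - t = Suc (T - Suc t)" "T - (T - Suc t) = Suc t" "T - Suc (T - Suc t) = t" by auto
  then show ?thesis unfolding Vfun_def Qfun_def by simp
qed

lemma Q_eq_sum: "Q t x u p = (\<Sum>w\<in>S t. ereal (pw t w) * (L t x u w p + V (Suc t) (f t x u w) p))"
  by (simp add: Qfun_def Expect_def)

lemma finite_S: "t < T \<Longrightarrow> finite (S t)"
  using finite_support[of "Suc t"] by auto

lemma V_le_Q: "t < T \<Longrightarrow> V t x p \<le> Q t x u p"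
  unfolding V_eq_INF_Q by (rule INF_lower) simp

lemma Uopt_iff_Q_eq_V: "t < T \<Longrightarrow> u \<in> Uopt t x p \<longleftrightarrow> Q t x u p = V t x p"
  unfolding Usol_def using V_le_Q by (auto intro: antisym simp: V_eq_INF_Q INF_greatest)

lemma V_less_PInfty_iff:
  assumes "t < T"
  shows "V t x p < \<infinity> \<longleftrightarrow> (\<exists>u. Q t x u p < \<infinity>)"
  unfolding V_eq_INF_Q[OF assms] INF_less_iff by simp

lemma Q_less_PInfty_iff:
  assumes "t < T"
  shows "Q t x u p < \<infinity> \<longleftrightarrow> (\<forall>w\<in>S t. L t x u w p < \<infinity> \<and> V (Suc t) (f t x u w) p < \<infinity>)"
proof -
  have "Q t x u p < \<infinity> \<longleftrightarrow> (\<forall>w\<in>S t. L t x u w p + V (Suc t) (f t x u w) p < \<infinity>)"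
    unfolding Q_eq_sum by (rule sum_ereal_weighted_less_PInfty_iff[OF finite_S[OF assms] pmf_positive])
  then show ?thesis by (simp only: ereal_add_less_PInfty_iff)
qed

lemma V_less_PInfty_reachable:
  assumes "V 0 x0 p < \<infinity>"
  shows "t \<le> T \<Longrightarrow> \<exists>x. V t x p < \<infinity>"
proof (induction t)
  case 0
  then show ?case using assms by blast
next
  case (Suc t)
  then obtain x where "V t x p < \<infinity>" by auto
  moreover have t: "t < T" using Suc by simp
  ultimately obtain u where "Q t x u p < \<infinity>" using V_less_PInfty_iff by blast
  moreover obtain w where "w \<in> S t" using set_pmf_not_empty[of "W (Suc t)"] by blast
  ultimately show ?case using Q_less_PInfty_iff[OF t] by blast
qed

definition future_paths :: "nat \<Rightarrow> (nat \<Rightarrow> 'w) set" where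
  "future_paths k = PiE {Suc k..T} (\<lambda>s. set_pmf (W s))"

definition future_prob :: "nat \<Rightarrow> (nat \<Rightarrow> 'w) \<Rightarrow> real" where
  "future_prob k \<omega> = (\<Prod>s\<in>{Suc k..T}. pmf (W s) (\<omega> s))"

definition future_expect :: "nat \<Rightarrow> ((nat \<Rightarrow> 'w) \<Rightarrow> ereal) \<Rightarrow> ereal" where
  "future_expect k G = (\<Sum>\<omega>\<in>future_paths k. ereal (future_prob k \<omega>) * G \<omega>)"

lemma future_prob_nonneg: "future_prob k \<omega> \<ge> 0"
  unfolding future_prob_def by (auto intro: prod_nonneg)

lemma sum_future_prob: "(\<Sum>\<omega>\<in>future_paths k. future_prob k \<omega>) = 1"
proof -
  have "(\<Sum>\<omega>\<in>future_paths k. future_prob k \<omega>) = (\<Prod>s\<in>{Suc k..T}. \<Sum>y\<in>set_pmf (W s). pmf (W s) y)"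
    unfolding future_paths_def future_prob_def by (rule prod_sum_PiE[symmetric]) (use finite_support in auto)
  also have "\<dots> = 1"
    by (rule prod.neutral) (use finite_support in \<open>auto intro!: sum_pmf_eq_1\<close>)
  finally show ?thesis .
qed

lemma future_expect_add_const: "future_expect k (\<lambda>\<omega>. a + G \<omega>) = a + future_expect k G"
proof -
  have "future_expect k (\<lambda>\<omega>. a + G \<omega>)
      = (\<Sum>\<omega>\<in>future_paths k. ereal (future_prob k \<omega>) * a) + future_expect k G"
    unfolding future_expect_def
    by (simp add: ereal_nonneg_distrib future_prob_nonneg sum.distrib)
  also have "(\<Sum>\<omega>\<in>future_paths k. ereal (future_prob k \<omega>) * a) = (\<Sum>\<omega>\<in>future_paths k. ereal (future_prob k \<omega>)) * a"
    by (rule sum_ereal_left_distrib[symmetric]) (simp add: future_prob_nonneg)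
  finally show ?thesis using sum_future_prob[of k] by simp
qed

lemma future_expect_T: "future_expect T G = G (\<lambda>_. undefined)"
  by (simp add: future_expect_def future_paths_def future_prob_def)

lemma future_expect_Suc:
  assumes k: "k < T"
  shows "future_expect k G = (\<Sum>w\<in>S k. ereal (pw k w) * future_expect (Suc k) (\<lambda>\<omega>. G (fun_upd \<omega> (Suc k) w)))"
proof -
  have iv: "{Suc k..T} = insert (Suc k) {Suc (Suc k)..T}" using k by auto
  have paths: "future_paths k = (\<lambda>(y, g). g(Suc k := y)) ` (S k \<times> future_paths (Suc k))"
    unfolding future_paths_def iv PiE_insert_eq by simp
  have inj: "inj_on (\<lambda>(y, g). g(Suc k := y)) (S k \<times> future_paths (Suc k))"
    unfolding future_paths_def using inj_combinator[of "Suc k" "{Suc (Suc k)..T}"] by simp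
  have prob: "future_prob k (g(Suc k := y)) = pw k y * future_prob (Suc k) g" for g y
  proof -
    have "future_prob k (g(Suc k := y)) = pw k y * (\<Prod>s\<in>{Suc (Suc k)..T}. pmf (W s) ((g(Suc k := y)) s))"
      unfolding future_prob_def iv by (subst prod.insert) auto
    also have "(\<Prod>s\<in>{Suc (Suc k)..T}. pmf (W s) ((g(Suc k := y)) s)) = future_prob (Suc k) g"
      unfolding future_prob_def by (intro prod.cong) auto
    finally show ?thesis .
  qed
  have "future_expect k G
      = (\<Sum>(y, g)\<in>S k \<times> future_paths (Suc k). ereal (future_prob k (g(Suc k := y))) * G (g(Suc k := y)))"
    unfolding future_expect_def paths by (subst sum.reindex[OF inj]) (simp add: case_prod_unfold)
  also have "\<dots> = (\<Sum>y\<in>S k. \<Sum>g\<in>future_paths (Suc k).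
      ereal (pw k y) * (ereal (future_prob (Suc k) g) * G (g(Suc k := y))))"
    by (subst sum.cartesian_product[symmetric]) (simp add: prob mult.assoc[symmetric])
  also have "\<dots> = (\<Sum>w\<in>S k. ereal (pw k w) * future_expect (Suc k) (\<lambda>\<omega>. G (fun_upd \<omega> (Suc k) w)))"
    unfolding future_expect_def
    by (intro sum.cong refl ereal_nonneg_mult_sum[symmetric]) simp
  finally show ?thesis .
qed

end

lemma state_cong:
  assumes "nonanticipative T pol"
  shows "t \<le> T \<Longrightarrow> (\<forall>s\<in>{1..t}. \<omega> s = \<omega>' s) \<Longrightarrow> state f x0 pol \<omega> t = state f x0 pol \<omega>' t"
proof (induct t)
  case 0
  then show ?case by simp
next
  case (Suc t)
  then have "pol t \<omega> = pol t \<omega>'" using assms unfolding nonanticipative_def by auto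
  with Suc show ?case by auto
qed

context multistage
begin

definition splice :: "nat \<Rightarrow> (nat \<Rightarrow> 'w) \<Rightarrow> (nat \<Rightarrow> 'w) \<Rightarrow> nat \<Rightarrow> 'w" where
  "splice k h \<omega> = (\<lambda>s. if k < s then \<omega> s else h s)"

definition cost_from :: "'x \<Rightarrow> (nat \<Rightarrow> (nat \<Rightarrow> 'w) \<Rightarrow> 'u) \<Rightarrow> 'p \<Rightarrow> nat \<Rightarrow> (nat \<Rightarrow> 'w) \<Rightarrow> ereal" where
  "cost_from x0 pol p k \<omega> = (\<Sum>s\<in>{k..<T}. L s (state f x0 pol \<omega> s) (pol s \<omega>) (\<omega> (Suc s)) p)
     + K (state f x0 pol \<omega> T) p"

text \<open>Expected cost of \<open>pol\<close> from stage \<open>k\<close> on, conditionally on the noise history \<open>h\<close>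
  up to stage \<open>k\<close>.\<close>
definition cost_to_go :: "'x \<Rightarrow> (nat \<Rightarrow> (nat \<Rightarrow> 'w) \<Rightarrow> 'u) \<Rightarrow> 'p \<Rightarrow> nat \<Rightarrow> (nat \<Rightarrow> 'w) \<Rightarrow> ereal" where
  "cost_to_go x0 pol p k h = future_expect k (\<lambda>\<omega>. cost_from x0 pol p k (splice k h \<omega>))"

lemma splice_fun_upd: "splice k h (fun_upd \<omega> (Suc k) w) = splice (Suc k) (h(Suc k := w)) \<omega>"
  unfolding splice_def by (rule ext) auto

context
  fixes x0 :: 'x and pol :: "nat \<Rightarrow> (nat \<Rightarrow> 'w) \<Rightarrow> 'u" and p :: 'p
  assumes na: "nonanticipative T pol"
begin

lemma cost_to_go_T: "cost_to_go x0 pol p T h = K (state f x0 pol h T) p"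
proof -
  have "state f x0 pol (splice T h (\<lambda>_. undefined)) T = state f x0 pol h T"
    by (rule state_cong[OF na]) (auto simp: splice_def)
  then show ?thesis by (simp add: cost_to_go_def future_expect_T cost_from_def)
qed

lemma state_fun_upd_Suc:
  assumes "k < T"
  shows "state f x0 pol (h(Suc k := w)) (Suc k) = f k (state f x0 pol h k) (pol k h) w"
proof -
  have "state f x0 pol (h(Suc k := w)) k = state f x0 pol h k"
    by (rule state_cong[OF na]) (use assms in auto)
  moreover have "pol k (h(Suc k := w)) = pol k h"
    using na assms unfolding nonanticipative_def by auto
  ultimately show ?thesis by simp
qed

lemma cost_to_go_Suc:
  assumes k: "k < T"
  shows "cost_to_go x0 pol p k h = (\<Sum>w\<in>S k. ereal (pw k w) *
    (L k (state f x0 pol h k) (pol k h) w p + cost_to_go x0 pol p (Suc k) (h(Suc k := w))))"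
proof -
  let ?x = "state f x0 pol h k" and ?u = "pol k h"
  have cost_split: "cost_from x0 pol p k (splice (Suc k) (h(Suc k := w)) \<omega>)
      = L k ?x ?u w p + cost_from x0 pol p (Suc k) (splice (Suc k) (h(Suc k := w)) \<omega>)" for w \<omega>
  proof -
    let ?\<omega> = "splice (Suc k) (h(Suc k := w)) \<omega>"
    have agree: "\<forall>s\<in>{1..k}. ?\<omega> s = h s" by (auto simp: splice_def)
    have "state f x0 pol ?\<omega> k = ?x" by (rule state_cong[OF na]) (use k agree in auto)
    moreover have "pol k ?\<omega> = ?u" using na k agree unfolding nonanticipative_def by auto
    moreover have "?\<omega> (Suc k) = w" by (simp add: splice_def)
    ultimately show ?thesis
      unfolding cost_from_def using k by (simp add: sum.atLeast_Suc_lessThan add.assoc)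
  qed
  show ?thesis
    unfolding cost_to_go_def future_expect_Suc[OF k] splice_fun_upd cost_split future_expect_add_const ..
qed

lemma V_le_cost_to_go: "k \<le> T \<Longrightarrow> V k (state f x0 pol h k) p \<le> cost_to_go x0 pol p k h"
proof (induction k arbitrary: h rule: inc_induct)
  case base
  then show ?case by (simp add: V_T cost_to_go_T)
next
  case (step k)
  let ?x = "state f x0 pol h k" and ?u = "pol k h"
  have IH: "V (Suc k) (f k ?x ?u w) p \<le> cost_to_go x0 pol p (Suc k) (h(Suc k := w))" for w
    using step.IH[of "h(Suc k := w)"] unfolding state_fun_upd_Suc[OF step(2)] .
  have "V k ?x p \<le> Q k ?x ?u p" using step(2) by (rule V_le_Q)
  also have "\<dots> \<le> cost_to_go x0 pol p k h"
    unfolding Q_eq_sum cost_to_go_Suc[OF step(2)]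
    by (intro sum_mono ereal_mult_left_mono add_left_mono IH) simp
  finally show ?case .
qed

lemma V_eq_cost_to_go:
  assumes opt: "\<forall>t<T. \<forall>\<omega>. pol t \<omega> \<in> Uopt t (state f x0 pol \<omega> t) p"
  shows "k \<le> T \<Longrightarrow> V k (state f x0 pol h k) p = cost_to_go x0 pol p k h"
proof (induction k arbitrary: h rule: inc_induct)
  case base
  then show ?case by (simp add: V_T cost_to_go_T)
next
  case (step k)
  let ?x = "state f x0 pol h k" and ?u = "pol k h"
  have IH: "V (Suc k) (f k ?x ?u w) p = cost_to_go x0 pol p (Suc k) (h(Suc k := w))" for w
    using step.IH[of "h(Suc k := w)"] unfolding state_fun_upd_Suc[OF step(2)] .
  have "V k ?x p = Q k ?x ?u p" using opt step(2) Uopt_iff_Q_eq_V by auto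
  also have "\<dots> = cost_to_go x0 pol p k h"
    unfolding Q_eq_sum cost_to_go_Suc[OF step(2)] IH ..
  finally show ?case .
qed

lemma expected_cost_eq_cost_to_go:
  "(\<Sum>\<omega>\<in>PiE {1..T} (\<lambda>t. set_pmf (W t)). ereal (\<Prod>t\<in>{1..T}. pmf (W t) (\<omega> t)) *
     ((\<Sum>t<T. L t (state f x0 pol \<omega> t) (pol t \<omega>) (\<omega> (Suc t)) p) + K (state f x0 pol \<omega> T) p))
   = cost_to_go x0 pol p 0 h"
  unfolding cost_to_go_def future_expect_def future_paths_def future_prob_def One_nat_def[symmetric]
proof (intro sum.cong refl arg_cong2[where f = "(*)"])
  fix \<omega> :: "nat \<Rightarrow> 'w"
  have agree: "\<forall>s\<in>{1..t}. splice 0 h \<omega> s = \<omega> s" for t by (auto simp: splice_def)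
  have "state f x0 pol (splice 0 h \<omega>) t = state f x0 pol \<omega> t" if "t \<le> T" for t
    by (rule state_cong[OF na that agree])
  moreover have "pol t (splice 0 h \<omega>) = pol t \<omega>" if "t < T" for t
    using na agree that unfolding nonanticipative_def by blast
  moreover have "splice 0 h \<omega> (Suc t) = \<omega> (Suc t)" for t by (simp add: splice_def)
  ultimately show "(\<Sum>t<T. L t (state f x0 pol \<omega> t) (pol t \<omega>) (\<omega> (Suc t)) p) + K (state f x0 pol \<omega> T) p
      = cost_from x0 pol p 0 (splice 0 h \<omega>)"
    unfolding cost_from_def atLeast0LessThan by (intro arg_cong2[where f = "(+)"] sum.cong) auto
qed

end

end

text \<open>The closed-loop state is defined directly, since a feedback policy cannot refer to
  \<open>state\<close> of itself.\<close>
primrec feedback_state :: "(nat \<Rightarrow> 'x \<Rightarrow> 'u) \<Rightarrow> (nat \<Rightarrow> 'x \<Rightarrow> 'u \<Rightarrow> 'w \<Rightarrow> 'x) \<Rightarrow> 'x \<Rightarrow> (nat \<Rightarrow> 'w) \<Rightarrow> nat \<Rightarrow> 'x" where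
  "feedback_state sel f x0 \<omega> 0 = x0"
| "feedback_state sel f x0 \<omega> (Suc t) =
     f t (feedback_state sel f x0 \<omega> t) (sel t (feedback_state sel f x0 \<omega> t)) (\<omega> (Suc t))"

definition feedback_policy :: "(nat \<Rightarrow> 'x \<Rightarrow> 'u) \<Rightarrow> (nat \<Rightarrow> 'x \<Rightarrow> 'u \<Rightarrow> 'w \<Rightarrow> 'x) \<Rightarrow> 'x \<Rightarrow> nat \<Rightarrow> (nat \<Rightarrow> 'w) \<Rightarrow> 'u" where
  "feedback_policy sel f x0 t \<omega> = sel t (feedback_state sel f x0 \<omega> t)"

lemma state_feedback_policy: "state f x0 (feedback_policy sel f x0) \<omega> t = feedback_state sel f x0 \<omega> t"
  by (induct t) (simp_all add: feedback_policy_def)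

lemma nonanticipative_feedback_policy: "nonanticipative T (feedback_policy sel f x0)"
proof -
  have "(\<forall>s\<in>{1..t}. \<omega> s = \<omega>' s) \<Longrightarrow> feedback_state sel f x0 \<omega> t = feedback_state sel f x0 \<omega>' t" for t \<omega> \<omega>'
    by (induct t) auto
  then show ?thesis unfolding nonanticipative_def feedback_policy_def by metis
qed

context multistage
begin

lemma V0_le_Phi: "V 0 x0 p \<le> Phi T f L K W x0 p"
  unfolding Phi_def
proof (rule INF_greatest)
  fix pol :: "nat \<Rightarrow> (nat \<Rightarrow> 'w) \<Rightarrow> 'u" assume "pol \<in> {pol. nonanticipative T pol}"
  then have na: "nonanticipative T pol" by simp
  show "V 0 x0 p \<le> (\<Sum>\<omega>\<in>PiE {1..T} (\<lambda>t. set_pmf (W t)). ereal (\<Prod>t\<in>{1..T}. pmf (W t) (\<omega> t)) *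
       ((\<Sum>t<T. L t (state f x0 pol \<omega> t) (pol t \<omega>) (\<omega> (Suc t)) p) + K (state f x0 pol \<omega> T) p))"
    unfolding expected_cost_eq_cost_to_go[OF na, where h = undefined]
    using V_le_cost_to_go[OF na, where k = 0 and h = undefined] by simp
qed

lemma Phi_eq_V0_if_Uopt_nonempty:
  assumes Uopt_nonempty: "\<And>t x. t < T \<Longrightarrow> Uopt t x p \<noteq> {}"
  shows "Phi T f L K W x0 p = V 0 x0 p"
proof (rule antisym[OF _ V0_le_Phi])
  define sel where "sel t x = (SOME u. u \<in> Uopt t x p)" for t x
  let ?pol = "feedback_policy sel f x0"
  have na: "nonanticipative T ?pol" by (rule nonanticipative_feedback_policy)
  have opt: "\<forall>t<T. \<forall>\<omega>. ?pol t \<omega> \<in> Uopt t (state f x0 ?pol \<omega> t) p"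
    unfolding state_feedback_policy feedback_policy_def sel_def
    using Uopt_nonempty by (simp add: some_in_eq)
  have "Phi T f L K W x0 p \<le> (\<Sum>\<omega>\<in>PiE {1..T} (\<lambda>t. set_pmf (W t)). ereal (\<Prod>t\<in>{1..T}. pmf (W t) (\<omega> t)) *
       ((\<Sum>t<T. L t (state f x0 ?pol \<omega> t) (?pol t \<omega>) (\<omega> (Suc t)) p) + K (state f x0 ?pol \<omega> T) p))"
    unfolding Phi_def by (rule INF_lower) (simp add: na)
  also have "\<dots> = V 0 x0 p"
    unfolding expected_cost_eq_cost_to_go[OF na, where h = undefined]
    using V_eq_cost_to_go[OF na opt, where k = 0 and h = undefined] by simp
  finally show "Phi T f L K W x0 p \<le> V 0 x0 p" .
qed

end

section \<open>Convexity and lower semicontinuity of the value functions\<close>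

lemma affine_xu_combination:
  assumes "affine_xu g"
  shows "g (l *\<^sub>R x1 + (1 - l) *\<^sub>R x2) (l *\<^sub>R u1 + (1 - l) *\<^sub>R u2) w
       = l *\<^sub>R g x1 u1 w + (1 - l) *\<^sub>R g x2 u2 w"
proof -
  interpret A: linear "\<lambda>(x, u). g x u w - g 0 0 w" using assms unfolding affine_xu_def by blast
  let ?A = "\<lambda>(x, u). g x u w - g 0 0 w"
  have "?A (l *\<^sub>R (x1, u1) + (1 - l) *\<^sub>R (x2, u2)) = ?A (l *\<^sub>R (x1, u1)) + ?A ((1 - l) *\<^sub>R (x2, u2))"
    by (rule A.add)
  also have "\<dots> = l *\<^sub>R ?A (x1, u1) + (1 - l) *\<^sub>R ?A (x2, u2)"
    by (simp only: A.scale)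
  finally show ?thesis by (simp add: algebra_simps)
qed

lemma continuous_on_affine_xu:
  fixes g :: "'x::euclidean_space \<Rightarrow> 'u::euclidean_space \<Rightarrow> 'w \<Rightarrow> 'x"
  assumes "affine_xu g"
  shows "continuous_on UNIV (\<lambda>z. g (fst z) (snd z) w)"
proof -
  let ?A = "\<lambda>(x, u). g x u w - g 0 0 w"
  have "linear ?A" using assms unfolding affine_xu_def by blast
  then have "continuous_on UNIV ?A" by (simp add: linear_continuous_on linear_conv_bounded_linear)
  then have "continuous_on UNIV (\<lambda>z. ?A z + g 0 0 w)" by (intro continuous_on_add continuous_on_const)
  then show ?thesis by (simp add: case_prod_unfold)
qed

locale convex_multistage = multistage T f L K W
  for T :: nat
    and f :: "nat \<Rightarrow> 'x::euclidean_space \<Rightarrow> 'u::euclidean_space \<Rightarrow> 'w::euclidean_space \<Rightarrow> 'x"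
    and L :: "nat \<Rightarrow> 'x \<Rightarrow> 'u \<Rightarrow> 'w \<Rightarrow> 'p::euclidean_space \<Rightarrow> ereal"
    and K :: "'x \<Rightarrow> 'p \<Rightarrow> ereal"
    and W :: "nat \<Rightarrow> 'w pmf" +
  assumes f_affine: "\<And>t. t < T \<Longrightarrow> affine_xu (f t)"
    and L_GammaK: "\<And>t w. t < T \<Longrightarrow> w \<in> set_pmf (W (Suc t)) \<Longrightarrow> GammaK_cls (\<lambda>z. L t (fst z) (snd z) w)"
    and K_Gamma: "Gamma_cls K"
begin

context
  fixes t
  assumes t: "t < T" and V_Suc_Gamma: "Gamma_cls (V (Suc t))"
begin

lemma V_Suc_neq_MInfty: "V (Suc t) x p \<noteq> -\<infinity>"
  using V_Suc_Gamma unfolding Gamma_cls_def by auto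

lemma Q_neq_MInfty: "Q t x u p \<noteq> -\<infinity>"
  unfolding Q_eq_sum
  by (intro sum_ereal_neq_MInfty ereal_mult_neq_MInfty) (auto simp: L_neq_MInfty V_Suc_neq_MInfty)

lemma convex_ereal_Q: "convex_ereal (\<lambda>z. Q t (fst (snd z)) (fst z) (snd (snd z)))"
proof -
  have L: "convex_ereal (\<lambda>z::'u \<times> 'x \<times> 'p. L t (fst (snd z)) (fst z) w (snd (snd z)))" if "w \<in> S t" for w
  proof -
    have "convex_ereal (case_prod (\<lambda>y. L t (fst y) (snd y) w))"
      using L_GammaK[OF t that] unfolding GammaK_cls_def Gamma_cls_def econvex_fun_iff by simp
    then have "convex_ereal (\<lambda>z::'u \<times> 'x \<times> 'p.
        case_prod (\<lambda>y. L t (fst y) (snd y) w) ((fst (snd z), fst z), snd (snd z)))"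
      by (rule convex_ereal_compose_affine) (simp add: prod_eq_iff)
    then show ?thesis by simp
  qed
  have V: "convex_ereal (\<lambda>z::'u \<times> 'x \<times> 'p. V (Suc t) (f t (fst (snd z)) (fst z) w) (snd (snd z)))" for w
  proof -
    have "convex_ereal (case_prod (V (Suc t)))"
      using V_Suc_Gamma unfolding Gamma_cls_def econvex_fun_iff by simp
    then have "convex_ereal (\<lambda>z::'u \<times> 'x \<times> 'p.
        case_prod (V (Suc t)) (f t (fst (snd z)) (fst z) w, snd (snd z)))"
      by (rule convex_ereal_compose_affine) (simp add: affine_xu_combination[OF f_affine[OF t]])
    then show ?thesis by simp
  qed
  show ?thesis
    unfolding Q_eq_sum
    by (intro convex_ereal_sum convex_ereal_cmult convex_ereal_add L V ereal_mult_neq_MInfty)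
      (auto simp: finite_S[OF t] L_neq_MInfty V_Suc_neq_MInfty)
qed

lemma lsc_ereal_Q: "lsc_ereal (\<lambda>z. Q t (fst (snd z)) (fst z) (snd (snd z)))"
proof -
  have L: "lsc_ereal (\<lambda>z::'u \<times> 'x \<times> 'p. L t (fst (snd z)) (fst z) w (snd (snd z)))" if "w \<in> S t" for w
  proof -
    have "lsc_ereal (case_prod (\<lambda>y. L t (fst y) (snd y) w))"
      using L_GammaK[OF t that] unfolding GammaK_cls_def Gamma_cls_def lsc_fun_iff by simp
    then have "lsc_ereal (\<lambda>z::'u \<times> 'x \<times> 'p.
        case_prod (\<lambda>y. L t (fst y) (snd y) w) ((fst (snd z), fst z), snd (snd z)))"
      by (rule lsc_ereal_compose_continuous) (intro continuous_intros)
    then show ?thesis by simp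
  qed
  have V: "lsc_ereal (\<lambda>z::'u \<times> 'x \<times> 'p. V (Suc t) (f t (fst (snd z)) (fst z) w) (snd (snd z)))" for w
  proof -
    have "lsc_ereal (case_prod (V (Suc t)))"
      using V_Suc_Gamma unfolding Gamma_cls_def lsc_fun_iff by simp
    have "continuous_on UNIV (\<lambda>z::'u \<times> 'x \<times> 'p. (fst (snd z), fst z))"
      by (intro continuous_intros)
    from continuous_on_compose2[OF continuous_on_affine_xu[OF f_affine[OF t], of w] this subset_UNIV]
    have "continuous_on UNIV (\<lambda>z::'u \<times> 'x \<times> 'p. f t (fst (snd z)) (fst z) w)" by simp
    then have "continuous_on UNIV (\<lambda>z::'u \<times> 'x \<times> 'p. (f t (fst (snd z)) (fst z) w, snd (snd z)))"
      by (intro continuous_on_Pair continuous_intros)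
    with \<open>lsc_ereal (case_prod (V (Suc t)))\<close> have "lsc_ereal (\<lambda>z::'u \<times> 'x \<times> 'p.
        case_prod (V (Suc t)) (f t (fst (snd z)) (fst z) w, snd (snd z)))"
      by (rule lsc_ereal_compose_continuous)
    then show ?thesis by simp
  qed
  show ?thesis
    unfolding Q_eq_sum
    by (intro lsc_ereal_sum lsc_ereal_cmult lsc_ereal_add L V ereal_mult_neq_MInfty)
      (auto simp: finite_S[OF t] L_neq_MInfty V_Suc_neq_MInfty)
qed

lemma Q_dom_compact: "\<exists>C. compact C \<and> (\<forall>x u p. Q t x u p < \<infinity> \<longrightarrow> u \<in> C)"
proof -
  obtain w where w: "w \<in> S t" using set_pmf_not_empty[of "W (Suc t)"] by blast
  then obtain C where "compact C" "\<And>x u p. L t x u w p < \<infinity> \<Longrightarrow> u \<in> C"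
    using L_GammaK[OF t w] unfolding GammaK_cls_def by auto
  with w show ?thesis unfolding Q_less_PInfty_iff[OF t] by blast
qed

lemma Uopt_nonempty_step: "Uopt t x p \<noteq> {}"
proof -
  obtain C where C: "compact C" "\<And>x u p. Q t x u p < \<infinity> \<Longrightarrow> u \<in> C" using Q_dom_compact by blast
  have "lsc_ereal (\<lambda>u. Q t x u p)"
    using lsc_ereal_compose_continuous[OF lsc_ereal_Q, of "\<lambda>u. (u, x, p)"] by (simp add: continuous_intros)
  then obtain u where "Q t x u p = (INF v. Q t x v p)"
    using lsc_ereal_attains_INF C by blast
  then have "u \<in> Uopt t x p" by (simp add: Uopt_iff_Q_eq_V[OF t] V_eq_INF_Q[OF t])
  then show ?thesis by blast
qed

lemma Gamma_cls_V_step: "Gamma_cls (V t)"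
proof -
  let ?F = "\<lambda>z. Q t (fst (snd z)) (fst z) (snd (snd z))"
  have V_eq: "case_prod (V t) = (\<lambda>y. INF u. ?F (u, y))"
    by (rule ext) (simp add: V_eq_INF_Q[OF t] case_prod_unfold)
  have attain: "\<exists>u. Q t x u p = V t x p" for x p
  proof -
    obtain u where "u \<in> Uopt t x p" using Uopt_nonempty_step by blast
    then show ?thesis unfolding Uopt_iff_Q_eq_V[OF t] by blast
  qed
  have "V t x p \<noteq> -\<infinity>" for x p
    using attain[of x p] Q_neq_MInfty by metis
  moreover have "convex_ereal (case_prod (V t))"
    unfolding V_eq
  proof (rule convex_ereal_INF[OF convex_ereal_Q])
    show "\<exists>u. ?F (u, y) = (INF v. ?F (v, y))" for y
      using attain[of "fst y" "snd y"] unfolding V_eq_INF_Q[OF t] by simp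
  qed
  moreover have "lsc_ereal (case_prod (V t))"
  proof -
    obtain C where "compact C" "\<And>x u p. Q t x u p < \<infinity> \<Longrightarrow> u \<in> C" using Q_dom_compact by blast
    then show ?thesis unfolding V_eq by (intro lsc_ereal_INF_compact[OF lsc_ereal_Q]) auto
  qed
  ultimately show ?thesis unfolding Gamma_cls_def econvex_fun_iff lsc_fun_iff by blast
qed

end

lemma Gamma_cls_V: "t \<le> T \<Longrightarrow> Gamma_cls (V t)"
proof (induction t rule: inc_induct)
  case base
  then show ?case using K_Gamma V_T by simp
next
  case (step t)
  then show ?case using Gamma_cls_V_step by blast
qed

lemma Uopt_nonempty: "t < T \<Longrightarrow> Uopt t x p \<noteq> {}"
  using Uopt_nonempty_step Gamma_cls_V[of "Suc t"] by simp

lemma Phi_eq_V0: "Phi T f L K W x0 p = V 0 x0 p"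
  by (rule Phi_eq_V0_if_Uopt_nonempty) (rule Uopt_nonempty)

lemma V_neq_MInfty: "t \<le> T \<Longrightarrow> V t x p \<noteq> -\<infinity>"
  using Gamma_cls_V unfolding Gamma_cls_def by blast

lemma proper_fun_V:
  assumes "V 0 x0 p < \<infinity>" "t \<le> T"
  shows "proper_fun (V t)"
proof -
  obtain x where "V t x p < \<infinity>" using V_less_PInfty_reachable assms by blast
  then have "(x, p) \<in> edom (V t)" by (simp add: edom_def)
  then show ?thesis unfolding proper_fun_def using V_neq_MInfty[OF assms(2)] by blast
qed

definition Q_real :: "nat \<Rightarrow> 'x \<Rightarrow> 'u \<Rightarrow> 'p \<Rightarrow> real" where
  "Q_real t x u q = (\<Sum>w\<in>S t. pw t w *
     (real_of_ereal (L t x u w q) + real_of_ereal (V (Suc t) (f t x u w) q)))"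

lemma Q_eq_Q_real:
  assumes t: "t < T" and fin: "Q t x u q < \<infinity>"
  shows "Q t x u q = ereal (Q_real t x u q)"
proof -
  have summand: "ereal (pw t w) * (L t x u w q + V (Suc t) (f t x u w) q)
      = ereal (pw t w * (real_of_ereal (L t x u w q) + real_of_ereal (V (Suc t) (f t x u w) q)))"
    if "w \<in> S t" for w
  proof -
    have fin: "L t x u w q < \<infinity>" "V (Suc t) (f t x u w) q < \<infinity>"
      using fin that unfolding Q_less_PInfty_iff[OF t] by auto
    have "L t x u w q = ereal (real_of_ereal (L t x u w q))"
      using fin(1) L_neq_MInfty[of t x u w q] by (cases "L t x u w q") auto
    moreover have "V (Suc t) (f t x u w) q = ereal (real_of_ereal (V (Suc t) (f t x u w) q))"
      using fin(2) V_neq_MInfty[of "Suc t" "f t x u w" q] t by (cases "V (Suc t) (f t x u w) q") auto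
    ultimately show ?thesis by (metis plus_ereal.simps(1) times_ereal.simps(1))
  qed
  have "Q t x u q = (\<Sum>w\<in>S t. ereal (pw t w *
      (real_of_ereal (L t x u w q) + real_of_ereal (V (Suc t) (f t x u w) q))))"
    unfolding Q_eq_sum by (rule sum.cong[OF refl summand])
  then show ?thesis unfolding Q_real_def by (simp only: sum_ereal)
qed

lemma convex_ereal_V_slice:
  assumes "t \<le> T"
  shows "convex_ereal (\<lambda>q. V t x q)"
proof -
  have comb: "l *\<^sub>R x + (1 - l) *\<^sub>R x = x" for l :: real
    by (simp add: scaleR_add_left[symmetric])
  have "convex_ereal (case_prod (V t))"
    using Gamma_cls_V[OF assms] unfolding Gamma_cls_def econvex_fun_iff by simp
  then have "convex_ereal (\<lambda>q. case_prod (V t) (x, q))"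
    by (rule convex_ereal_compose_affine) (simp add: comb)
  then show ?thesis by simp
qed

end

section \<open>Differentiability of the value functions\<close>

locale smooth_multistage = convex_multistage T f L K W
  for T :: nat
    and f :: "nat \<Rightarrow> 'x::euclidean_space \<Rightarrow> 'u::euclidean_space \<Rightarrow> 'w::euclidean_space \<Rightarrow> 'x"
    and L :: "nat \<Rightarrow> 'x \<Rightarrow> 'u \<Rightarrow> 'w \<Rightarrow> 'p::euclidean_space \<Rightarrow> ereal"
    and K :: "'x \<Rightarrow> 'p \<Rightarrow> ereal"
    and W :: "nat \<Rightarrow> 'w pmf" +
  fixes P :: "'p set"
  assumes L_ThetaK: "\<And>t w. t < T \<Longrightarrow> w \<in> set_pmf (W (Suc t)) \<Longrightarrow> ThetaK_cls P (\<lambda>z. L t (fst z) (snd z) w)"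
    and K_Theta: "Theta_cls P K"
begin

definition grad_Q :: "nat \<Rightarrow> 'x \<Rightarrow> 'u \<Rightarrow> 'p \<Rightarrow> 'p" where
  "grad_Q t x u p = (\<Sum>w\<in>S t. pw t w *\<^sub>R
     (pgrad (\<lambda>z. L t (fst z) (snd z) w) (x, u) p + pgrad (V (Suc t)) (f t x u w) p))"

lemma L_Theta: "t < T \<Longrightarrow> w \<in> S t \<Longrightarrow> Theta_cls P (\<lambda>z. L t (fst z) (snd z) w)"
  using L_ThetaK unfolding ThetaK_cls_def by blast

context
  fixes t
  assumes t: "t < T" and V_Suc_Theta: "Theta_cls P (V (Suc t))"
begin

lemma L_less_PInfty_iff:
  assumes "w \<in> S t"
  shows "L t x u w p < \<infinity> \<longleftrightarrow> (\<exists>q\<in>P. L t x u w q < \<infinity>) \<and> p \<in> P"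
  using Theta_cls_less_PInfty_iff[OF L_Theta[OF t assms], of "(x, u)" p] by simp

lemma Q_less_PInfty_mem: "Q t x u p < \<infinity> \<Longrightarrow> p \<in> P"
proof -
  assume "Q t x u p < \<infinity>"
  moreover obtain w where w: "w \<in> S t" using set_pmf_not_empty[of "W (Suc t)"] by blast
  ultimately have "L t x u w p < \<infinity>" unfolding Q_less_PInfty_iff[OF t] by blast
  then show "p \<in> P" using L_less_PInfty_iff[OF w, of x u p] by blast
qed

lemma Q_less_PInfty_transfer:
  assumes "Q t x u p < \<infinity>" "q \<in> P"
  shows "Q t x u q < \<infinity>"
proof -
  have "L t x u w q < \<infinity> \<and> V (Suc t) (f t x u w) q < \<infinity>" if "w \<in> S t" for w
  proof -
    have "L t x u w p < \<infinity>" "V (Suc t) (f t x u w) p < \<infinity>"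
      using assms(1) that unfolding Q_less_PInfty_iff[OF t] by auto
    then show ?thesis
      using L_less_PInfty_iff[OF that, of x u p] L_less_PInfty_iff[OF that, of x u q]
        Theta_cls_less_PInfty_iff[OF V_Suc_Theta, of "f t x u w" p]
        Theta_cls_less_PInfty_iff[OF V_Suc_Theta, of "f t x u w" q] assms(2)
      by blast
  qed
  then show ?thesis unfolding Q_less_PInfty_iff[OF t] by blast
qed

lemma V_less_PInfty_iff_P: "V t x p < \<infinity> \<longleftrightarrow> (\<exists>q\<in>P. V t x q < \<infinity>) \<and> p \<in> P"
proof
  assume "V t x p < \<infinity>"
  then obtain u where "Q t x u p < \<infinity>" using V_less_PInfty_iff[OF t] by blast
  then show "(\<exists>q\<in>P. V t x q < \<infinity>) \<and> p \<in> P"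
    using Q_less_PInfty_mem \<open>V t x p < \<infinity>\<close> by blast
next
  assume "(\<exists>q\<in>P. V t x q < \<infinity>) \<and> p \<in> P"
  then obtain q u where "Q t x u q < \<infinity>" "p \<in> P" using V_less_PInfty_iff[OF t] by blast
  then have "Q t x u p < \<infinity>" by (rule Q_less_PInfty_transfer)
  then show "V t x p < \<infinity>" using V_less_PInfty_iff[OF t] by blast
qed

lemma has_derivative_Q_real:
  assumes p: "p \<in> interior P" and fin: "Q t x u p < \<infinity>"
  shows "(Q_real t x u has_derivative (\<lambda>h. grad_Q t x u p \<bullet> h)) (at p)"
proof -
  have LV_fin: "L t x u w p < \<infinity>" "V (Suc t) (f t x u w) p < \<infinity>" if "w \<in> S t" for w
    using fin that unfolding Q_less_PInfty_iff[OF t] by auto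
  have "(Q_real t x u has_derivative (\<lambda>h. \<Sum>w\<in>S t. pw t w *
      (pgrad (\<lambda>z. L t (fst z) (snd z) w) (x, u) p \<bullet> h + pgrad (V (Suc t)) (f t x u w) p \<bullet> h))) (at p)"
    unfolding Q_real_def[abs_def]
  proof (intro has_derivative_sum has_derivative_mult_right has_derivative_add)
    fix w assume w: "w \<in> S t"
    have "(\<lambda>q. real_of_ereal ((\<lambda>z. L t (fst z) (snd z) w) (x, u) q)) differentiable (at p)"
      using LV_fin(1)[OF w] by (intro Theta_cls_differentiable[OF L_Theta[OF t w] _ p, where q = p]) simp
    then show "((\<lambda>q. real_of_ereal (L t x u w q)) has_derivative
        (\<lambda>h. pgrad (\<lambda>z. L t (fst z) (snd z) w) (x, u) p \<bullet> h)) (at p)"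
      using has_derivative_pgrad[of "\<lambda>z. L t (fst z) (snd z) w" "(x, u)" p] by simp
    have "(\<lambda>q. real_of_ereal (V (Suc t) (f t x u w) q)) differentiable (at p)"
      by (rule Theta_cls_differentiable[OF V_Suc_Theta LV_fin(2)[OF w] p])
    then show "((\<lambda>q. real_of_ereal (V (Suc t) (f t x u w) q)) has_derivative
        (\<lambda>h. pgrad (V (Suc t)) (f t x u w) p \<bullet> h)) (at p)"
      by (rule has_derivative_pgrad[of "V (Suc t)" "f t x u w" p])
  qed
  then show ?thesis by (simp add: grad_Q_def inner_sum_left inner_add_left)
qed

lemma has_derivative_V:
  assumes p: "p \<in> interior P" and fin: "V t x p < \<infinity>" and u: "u \<in> Uopt t x p"
  shows "((\<lambda>q. real_of_ereal (V t x q)) has_derivative (\<lambda>h. grad_Q t x u p \<bullet> h)) (at p)"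
proof -
  have Q_p: "Q t x u p = V t x p" using u by (simp add: Uopt_iff_Q_eq_V[OF t])
  have Q_real: "Q t x u q = ereal (Q_real t x u q)" if "q \<in> P" for q
    using Q_less_PInfty_transfer[of x u p q] Q_p fin that by (simp add: Q_eq_Q_real[OF t])
  have V_fin: "\<bar>V t x q\<bar> \<noteq> \<infinity>" if "q \<in> P" for q
    using fin V_less_PInfty_iff_P[of x p] V_less_PInfty_iff_P[of x q] V_neq_MInfty[of t x q] t that
    by auto
  have p_P: "p \<in> P" using p interior_subset by blast
  obtain e where e: "e > 0" "ball p e \<subseteq> interior P"
    using p open_interior open_contains_ball by blast
  then have ball_P: "q \<in> P" if "q \<in> ball p e" for q using that interior_subset by blast
  show ?thesis
  proof (rule has_derivative_convex_below[OF open_ball centre_in_ball[THEN iffD2, OF e(1)]])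
    show "convex_on (ball p e) (\<lambda>q. real_of_ereal (V t x q))"
      using t by (intro convex_on_real_of_ereal convex_ereal_V_slice convex_ball V_fin ball_P) auto
    show "real_of_ereal (V t x q) \<le> Q_real t x u q" if "q \<in> ball p e" for q
      using V_le_Q[OF t, of x q u] Q_real[OF ball_P[OF that]] V_fin[OF ball_P[OF that]]
      by (cases "V t x q") auto
    have "V t x p = ereal (Q_real t x u p)" using Q_p Q_real[OF p_P] by simp
    then show "real_of_ereal (V t x p) = Q_real t x u p" by simp
    show "(Q_real t x u has_derivative (\<lambda>h. grad_Q t x u p \<bullet> h)) (at p)"
      using Q_p fin by (intro has_derivative_Q_real p) simp
  qed
qed

lemma Theta_cls_V_step: "Theta_cls P (V t)"
proof (rule Theta_clsI[OF Gamma_cls_V V_less_PInfty_iff_P])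
  show "t \<le> T" using t by simp
  fix y p assume p: "p \<in> interior P" and fin: "V t y p < \<infinity>"
  obtain u where u: "u \<in> Uopt t y p" using Uopt_nonempty[OF t] by blast
  from has_derivative_V[OF p fin u] show "(\<lambda>q. real_of_ereal (V t y q)) differentiable (at p)"
    by (rule differentiableI)
qed

end

lemma Theta_cls_V: "t \<le> T \<Longrightarrow> Theta_cls P (V t)"
proof (induction t rule: inc_induct)
  case base
  then show ?case using K_Theta V_T by simp
next
  case (step t)
  then show ?case using Theta_cls_V_step by blast
qed

lemma pgrad_V:
  assumes "t < T" "p \<in> interior P" "V t x p < \<infinity>" "u \<in> Uopt t x p"
  shows "pgrad (V t) x p = grad_Q t x u p"
  using assms Theta_cls_V[of "Suc t"] by (intro pgrad_eqI has_derivative_V) auto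

lemma Phi_convex_differentiable:
  assumes "Phi T f L K W x0 p0 < \<infinity>" "convex C" "C \<subseteq> P"
  shows "(\<forall>p\<in>C. Phi T f L K W x0 p \<noteq> \<infinity> \<and> Phi T f L K W x0 p \<noteq> -\<infinity>)
    \<and> convex_on C (\<lambda>p. real_of_ereal (Phi T f L K W x0 p))
    \<and> (\<forall>p\<in>interior P. (\<lambda>q. real_of_ereal (Phi T f L K W x0 q)) differentiable (at p))"
  unfolding Phi_eq_V0
proof (intro conjI ballI)
  have V0_Theta: "Theta_cls P (V 0)" by (rule Theta_cls_V) simp
  have V0_p0: "V 0 x0 p0 < \<infinity>" using assms(1) by (simp add: Phi_eq_V0)
  have V0_fin: "\<bar>V 0 x0 p\<bar> \<noteq> \<infinity>" if "p \<in> P" for p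
    using Theta_cls_less_PInfty_iff[OF V0_Theta, of x0 p0] Theta_cls_less_PInfty_iff[OF V0_Theta, of x0 p]
      V0_p0 V_neq_MInfty[of 0 x0 p] that by auto
  show "V 0 x0 p \<noteq> \<infinity>" "V 0 x0 p \<noteq> -\<infinity>" if "p \<in> C" for p
    using V0_fin[of p] that assms(3) by auto
  show "convex_on C (\<lambda>p. real_of_ereal (V 0 x0 p))"
    using assms(2,3) by (intro convex_on_real_of_ereal convex_ereal_V_slice) (auto intro!: V0_fin)
  show "(\<lambda>q. real_of_ereal (V 0 x0 q)) differentiable (at p)" if "p \<in> interior P" for p
    using Theta_cls_differentiable[OF V0_Theta V0_p0 that] .
qed

end

theorem theorem2:
  fixes T :: nat
    and f :: "nat \<Rightarrow> 'x::euclidean_space \<Rightarrow> 'u::euclidean_space \<Rightarrow> 'w::euclidean_space \<Rightarrow> 'x"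
    and L :: "nat \<Rightarrow> 'x \<Rightarrow> 'u \<Rightarrow> 'w \<Rightarrow> 'p::euclidean_space \<Rightarrow> ereal"
    and K :: "'x \<Rightarrow> 'p \<Rightarrow> ereal"
    and W :: "nat \<Rightarrow> 'w pmf"
    and x0 :: 'x
    and Pad :: "'p set"
  assumes T: "T \<ge> 1"
    and L_ninf: "\<And>t x u w p. L t x u w p \<noteq> -\<infinity>"
    and K_ninf: "\<And>x p. K x p \<noteq> -\<infinity>"
    \<comment> \<open>(A1): independence is built into the product law used in Phi; finite supports\<close>
    and A1: "\<And>t. t \<in> {1..T} \<Longrightarrow> finite (set_pmf (W t))"
    \<comment> \<open>(A2)\<close>
    and A2i: "\<exists>p\<in>Pad. Phi T f L K W x0 p < \<infinity>"
    and A2ii: "\<And>t. t < T \<Longrightarrow> affine_xu (f t)"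
    and A2iii: "\<And>t w. t < T \<Longrightarrow> w \<in> set_pmf (W (Suc t)) \<Longrightarrow>
                   GammaK_cls (\<lambda>z. L t (fst z) (snd z) w)"
    and A2iv: "Gamma_cls K"
  shows "(\<forall>t\<le>T. proper_fun (Vfun T f L K W t) \<and> Gamma_cls (Vfun T f L K W t))
    \<and> (\<forall>P :: 'p set.
        ((\<forall>t<T. \<forall>w\<in>set_pmf (W (Suc t)). ThetaK_cls P (\<lambda>z. L t (fst z) (snd z) w))
          \<and> Theta_cls P K)
        \<longrightarrow>
          \<comment> \<open>(a)\<close>
          (\<forall>t\<le>T. Theta_cls P (Vfun T f L K W t))
          \<and> (\<forall>p\<in>interior P. \<forall>x. Vfun T f L K W T x p < \<infinity> \<longrightarrow>
                pgrad (Vfun T f L K W T) x p = pgrad K x p)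
          \<and> (\<forall>t<T. \<forall>p\<in>interior P. \<forall>x. Vfun T f L K W t x p < \<infinity> \<longrightarrow>
                Usol T f L K W t x p \<noteq> {} \<and>
                (\<forall>u\<in>Usol T f L K W t x p.
                   pgrad (Vfun T f L K W t) x p =
                     (\<Sum>w\<in>set_pmf (W (Suc t)). pmf (W (Suc t)) w *\<^sub>R
                        (pgrad (\<lambda>z. L t (fst z) (snd z) w) (x, u) p
                         + pgrad (Vfun T f L K W (Suc t)) (f t x u w) p))))
          \<comment> \<open>(b)\<close>
          \<and> (\<forall>Pad'. closed Pad' \<and> convex Pad' \<and> Pad' \<subseteq> P \<longrightarrow>
                (\<forall>p\<in>Pad'. Phi T f L K W x0 p \<noteq> \<infinity> \<and> Phi T f L K W x0 p \<noteq> -\<infinity>)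
                \<and> convex_on Pad' (\<lambda>p. real_of_ereal (Phi T f L K W x0 p))
                \<and> (\<forall>p\<in>interior P. (\<lambda>q. real_of_ereal (Phi T f L K W x0 q)) differentiable (at p))))"
proof -
  interpret convex_multistage T f L K W
    using L_ninf A1 A2ii A2iii A2iv by unfold_locales
  obtain p0 where p0: "Phi T f L K W x0 p0 < \<infinity>" using A2i by blast
  then have V0_p0: "V 0 x0 p0 < \<infinity>" by (simp add: Phi_eq_V0)
  have smooth: "smooth_multistage T f L K W P"
    if "(\<forall>t<T. \<forall>w\<in>set_pmf (W (Suc t)). ThetaK_cls P (\<lambda>z. L t (fst z) (snd z) w)) \<and> Theta_cls P K"
    for P
    using that by unfold_locales auto
  show ?thesis
  proof (intro conjI allI impI ballI)
    fix t assume "t \<le> T"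
    then show "proper_fun (V t)" "Gamma_cls (V t)" using proper_fun_V[OF V0_p0] Gamma_cls_V by auto
  qed (use smooth_multistage.Theta_cls_V[OF smooth] smooth_multistage.pgrad_V[OF smooth]
      smooth_multistage.Phi_convex_differentiable[OF smooth p0] Uopt_nonempty
      in \<open>auto simp: V_T smooth_multistage.grad_Q_def[OF smooth]\<close>)
qed

end
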